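(* Let $|\psi\rangle_{ABC}$ be a three-qubit pure state, each qubit carrying the Hamiltonian $H_A=H_B=H_C=|1\rangle\langle1|$, and let $s=\{A,B,C\}$. If $M^{(s)}_E(|\psi\rangle_{ABC})>\frac12$, then $|\psi\rangle_{ABC}$ is genuinely multipartite entangled, i.e. it is not of the form $|\phi\rangle_{XY}\otimes|\chi\rangle_Z$ for any bipartition $\{X,Y\}|Z$ of $\{A,B,C\}$.
   Context: For a multi-qubit subsystem $X$ the Hamiltonian is $H_X=\sum_{i\in X}H_i$. For a state $\rho_X$ with eigenvalues $p_0\ge p_1\ge\cdots$ and $H_X$ with eigenvalues $0=\epsilon_0\le\epsilon_1\le\cdots$, the passive-state energy is $\mathrm{tr}(\rho_X^pH_X)=\sum_jp_j\epsilon_j$. For a pure state $|\psi\rangle$ and $X\subseteq\{A,B,C\}$, $\Delta_{X|X^c}(|\psi\rangle)=\mathrm{tr}(\rho_X^pH_X)+\mathrm{tr}(\rho_{X^c}^pH_{X^c})$ with $\rho_X$ the marginal, and $\Delta=0$ for $X=\emptyset$ or $X=\{A,B,C\}$. Then $M^{(s)}_E(|\psi\rangle)=2^{-3}\sum_{X\subseteq\{A,B,C\}}\Delta_{X|X^c}(|\psi\rangle)$. *)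

theory Defs
  imports "Jordan_Normal_Form.Char_Poly" "HOL-Computational_Algebra.Fundamental_Theorem_Algebra"
begin

text \<open>Three qubits A, B, C are labelled 0, 1, 2. A three-qubit state is a vector in C^8;
  basis index k < 8 encodes the computational basis state in which qubit t is |1> iff
  bit t of k is set.\<close>

definition qubits :: "nat set" where "qubits = {0, 1, 2}"

definition bitq :: "nat \<Rightarrow> nat \<Rightarrow> bool" where
  "bitq k t = odd (k div 2 ^ t)"

text \<open>Index (in 0 ..< 2^card X) of the restriction of basis state k to the qubits in X
  (qubits of X in increasing order, the i-th one being bit i).\<close>
definition sub_index :: "nat set \<Rightarrow> nat \<Rightarrow> nat" where
  "sub_index X k = (\<Sum>t<card X. if bitq k (sorted_list_of_set X ! t) then 2 ^ t else 0)"

definition is_pure_state :: "complex vec \<Rightarrow> bool" where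
  "is_pure_state \<psi> \<longleftrightarrow> dim_vec \<psi> = 8 \<and> (\<Sum>k<8. (cmod (\<psi> $ k))^2) = 1"

text \<open>Reduced density matrix (partial trace over the complement of X) of |psi><psi|.\<close>
definition reduced :: "complex vec \<Rightarrow> nat set \<Rightarrow> complex mat" where
  "reduced \<psi> X = mat (2 ^ card X) (2 ^ card X) (\<lambda>(i, j).
     \<Sum>k\<in>{k. k < 8 \<and> sub_index X k = i}.
       \<Sum>l\<in>{l. l < 8 \<and> sub_index X l = j \<and> sub_index (qubits - X) l = sub_index (qubits - X) k}.
         \<psi> $ k * cnj (\<psi> $ l))"

text \<open>H_X = sum over qubits i in X of H_i (tensored with identities), with H_i = |1><1|.\<close>
definition ham :: "nat set \<Rightarrow> complex mat" where
  "ham X = mat (2 ^ card X) (2 ^ card X) (\<lambda>(i, j).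
     \<Sum>t<card X. if i = j \<and> bitq i t then 1 else 0)"

definition eigs :: "complex mat \<Rightarrow> real list" where
  "eigs A = sorted_list_of_multiset (image_mset Re (proots (char_poly A)))"

text \<open>Passive-state energy: p_0 \<ge> p_1 \<ge> ... paired with 0 = eps_0 \<le> eps_1 \<le> ....\<close>
definition passive_energy :: "complex mat \<Rightarrow> complex mat \<Rightarrow> real" where
  "passive_energy \<rho> H = (\<Sum>j<dim_row \<rho>. rev (eigs \<rho>) ! j * eigs H ! j)"

definition Delta :: "complex vec \<Rightarrow> nat set \<Rightarrow> real" where
  "Delta \<psi> X = (if X = {} \<or> X = qubits then 0
     else passive_energy (reduced \<psi> X) (ham X)
        + passive_energy (reduced \<psi> (qubits - X)) (ham (qubits - X)))"

definition ME :: "complex vec \<Rightarrow> real" where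
  "ME \<psi> = (1 / 2 ^ 3) * (\<Sum>X\<in>Pow qubits. Delta \<psi> X)"

definition product_across :: "complex vec \<Rightarrow> nat \<Rightarrow> bool" where
  "product_across \<psi> Z \<longleftrightarrow> (\<exists>\<phi> \<chi> :: nat \<Rightarrow> complex. \<forall>k<8.
      \<psi> $ k = \<phi> (sub_index (qubits - {Z}) k) * \<chi> (sub_index {Z} k))"

definition genuinely_entangled :: "complex vec \<Rightarrow> bool" where
  "genuinely_entangled \<psi> \<longleftrightarrow> (\<forall>Z\<in>qubits. \<not> product_across \<psi> Z)"

end

theory Submission
  imports Defs
begin

(* Let C be the 2 x 4 coefficient matrix of psi across the cut Z | rest, so that rho_Z = C C^H and
   rho_rest = (C^H C)^T.  By Sylvester's identity char_poly (C^H C) = x^2 char_poly (C C^H): if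
   r1, r2 are the eigenvalues of rho_Z, then rho_rest has eigenvalues 0, 0, r1, r2, and both
   passive energies in Delta_{Z|rest} are at most min (Re r1) (Re r2).  As r1 + r2 = tr rho_Z = 1,
   this gives Delta_{Z|rest} <= 1; if psi is a product across Z, then det rho_Z = 0 forces a zero
   eigenvalue and Delta_{Z|rest} <= 0.  The sum over all subsets X counts every single-qubit cut
   twice, so M_E <= (2/8) (0 + 1 + 1) = 1/2. *)

subsection \<open>Sylvester's determinant identity and 2 x 2 characteristic polynomials\<close>

lemma det_sub_mult_commute:
  fixes A B :: "'a :: field mat" and k :: 'a
  assumes A: "A \<in> carrier_mat n m" and B: "B \<in> carrier_mat m n"
  shows "k ^ m * det (k \<cdot>\<^sub>m 1\<^sub>m n - A * B) = k ^ n * det (k \<cdot>\<^sub>m 1\<^sub>m m - B * A)"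
proof -
  \<comment> \<open>X = [[k I, A], [B, I]]; eliminating B by L from the right and by R from the left\<close>
  define X where "X = four_block_mat (k \<cdot>\<^sub>m 1\<^sub>m n) A B (1\<^sub>m m)"
  define L where "L = four_block_mat (1\<^sub>m n) (0\<^sub>m n m) (- B) (1\<^sub>m m)"
  define R where "R = four_block_mat (1\<^sub>m n) (0\<^sub>m n m) (- B) (k \<cdot>\<^sub>m 1\<^sub>m m)"
  have X: "X \<in> carrier_mat (n + m) (n + m)" and L: "L \<in> carrier_mat (n + m) (n + m)"
    and R: "R \<in> carrier_mat (n + m) (n + m)"
    using A B by (auto simp: X_def L_def R_def)
  have AB: "k \<cdot>\<^sub>m 1\<^sub>m n - A * B \<in> carrier_mat n n"
    and BA: "k \<cdot>\<^sub>m 1\<^sub>m m - B * A \<in> carrier_mat m m"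
    using A B by auto
  have "det L = 1"
    using B det_four_block_mat_upper_right_zero[of "1\<^sub>m n" n "0\<^sub>m n m" m "- B" "1\<^sub>m m"]
    by (simp add: L_def)
  then have "det X = det (X * L)"
    using det_mult[OF X L] by simp
  also have "X * L = four_block_mat (k \<cdot>\<^sub>m 1\<^sub>m n - A * B) A (0\<^sub>m m n) (1\<^sub>m m)"
    unfolding X_def L_def using A B
    by (subst mult_four_block_mat[of _ n n _ m _ m]) (auto simp: mult_smult_distrib)
  also have "det \<dots> = det (k \<cdot>\<^sub>m 1\<^sub>m n - A * B)"
    using det_four_block_mat_lower_left_zero[OF AB A refl, of "1\<^sub>m m"] by simp
  finally have detX: "det X = det (k \<cdot>\<^sub>m 1\<^sub>m n - A * B)" .
  have "det R = k ^ m"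
    using B det_four_block_mat_upper_right_zero[of "1\<^sub>m n" n "0\<^sub>m n m" m "- B" "k \<cdot>\<^sub>m 1\<^sub>m m"]
    by (simp add: R_def det_smult)
  then have "k ^ m * det X = det (R * X)"
    using det_mult[OF R X] by simp
  also have "R * X = four_block_mat (k \<cdot>\<^sub>m 1\<^sub>m n) A (0\<^sub>m m n) (k \<cdot>\<^sub>m 1\<^sub>m m - B * A)"
    unfolding X_def R_def using A B
    by (subst mult_four_block_mat[of _ n n _ m _ m]) (auto simp: mult_smult_distrib)
  also have "det \<dots> = k ^ n * det (k \<cdot>\<^sub>m 1\<^sub>m m - B * A)"
    using det_four_block_mat_lower_left_zero[of "k \<cdot>\<^sub>m 1\<^sub>m n" n A m "0\<^sub>m m n", OF _ A refl BA]
    by (simp add: det_smult)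
  finally show ?thesis using detX by simp
qed

lemma char_poly_mult_commute:
  fixes A B :: "'a :: field_char_0 mat"
  assumes A: "A \<in> carrier_mat n m" and B: "B \<in> carrier_mat m n"
  shows "monom 1 m * char_poly (A * B) = monom 1 n * char_poly (B * A)"
proof -
  have eval: "poly (char_poly C) k = det (k \<cdot>\<^sub>m 1\<^sub>m d - C)"
    if "C \<in> carrier_mat d d" for C :: "'a mat" and d k
  proof -
    have "- char_matrix C k = k \<cdot>\<^sub>m 1\<^sub>m d - C"
      using that by (intro eq_matI) (auto simp: char_matrix_def)
    then show ?thesis using char_poly_matrix[OF that] by simp
  qed
  have "A * B \<in> carrier_mat n n" "B * A \<in> carrier_mat m m"
    using A B by auto
  then have "poly (monom 1 m * char_poly (A * B)) k = poly (monom 1 n * char_poly (B * A)) k" for k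
    using det_sub_mult_commute[OF A B, of k] by (simp add: poly_monom eval)
  then show ?thesis by (metis poly_eq_poly_eq_iff ext)
qed

lemma det_mat_2:
  assumes "A \<in> carrier_mat 2 2"
  shows "det A = A $$ (0, 0) * A $$ (1, 1) - A $$ (0, 1) * A $$ (1, 0)"
proof -
  have "det A = (\<Sum>i<2. A $$ (i, 0) * cofactor A i 0)"
    using laplace_expansion_column[OF assms, of 0] by simp
  also have "\<dots> = A $$ (0, 0) * A $$ (1, 1) - A $$ (0, 1) * A $$ (1, 0)"
    using assms by (simp add: lessThan_nat_numeral cofactor_def mat_delete_def det_single)
  finally show ?thesis .
qed

lemma char_poly_mat_2:
  fixes A :: "'a :: field_char_0 mat"
  assumes A: "A \<in> carrier_mat 2 2"
  shows "char_poly A = [:det A, - (A $$ (0, 0) + A $$ (1, 1)), 1:]"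
proof -
  have "poly (char_poly A) k = poly [:det A, - (A $$ (0, 0) + A $$ (1, 1)), 1:] k" for k
  proof -
    have "- char_matrix A k \<in> carrier_mat 2 2"
      using A by simp
    then show ?thesis
      using A by (simp add: char_poly_matrix det_mat_2 char_matrix_def algebra_simps)
  qed
  then show ?thesis by (metis poly_eq_poly_eq_iff ext)
qed

lemma proots_linear_factors: "proots (\<Prod>r\<leftarrow>rs. [:- r, 1:]) = mset (rs :: complex list)"
proof (induction rs)
  case (Cons r rs)
  have "(\<Prod>r\<leftarrow>rs. [:- r, 1:]) \<noteq> (0 :: complex poly)"
    by (auto simp: prod_list_zero_iff)
  then show ?case
    using Cons proots_mult[of "[:- r, 1:]" "\<Prod>r\<leftarrow>rs. [:- r, 1:]"] by simp
qed simp

lemma char_poly_mat_2_roots: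
  fixes A :: "complex mat"
  assumes A: "A \<in> carrier_mat 2 2"
  obtains r1 r2 where "char_poly A = (\<Prod>r\<leftarrow>[r1, r2]. [:- r, 1:])"
    and "r1 + r2 = A $$ (0, 0) + A $$ (1, 1)" and "r1 * r2 = det A"
proof -
  obtain rs where rs: "char_poly A = (\<Prod>r\<leftarrow>rs. [:- r, 1:])" "length rs = 2"
    using char_poly_factorized[OF A] by blast
  then obtain r1 r2 where "rs = [r1, r2]"
    by (auto simp: numeral_eq_Suc length_Suc_conv)
  with rs(1) have cp: "char_poly A = (\<Prod>r\<leftarrow>[r1, r2]. [:- r, 1:])"
    by (simp only:)
  moreover have "r1 + r2 = A $$ (0, 0) + A $$ (1, 1)" "r1 * r2 = det A"
    using char_poly_mat_2[OF A] cp by (simp_all add: algebra_simps)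
  ultimately show ?thesis
    using that by blast
qed

lemma eigs_linear_factors:
  "char_poly A = (\<Prod>r\<leftarrow>rs. [:- r, 1:]) \<Longrightarrow> eigs A = sort (map Re rs)"
  unfolding eigs_def by (metis proots_linear_factors mset_map sorted_list_of_multiset_mset)

lemma eigs_ham: "eigs (ham X) = sort (map Re (diag_mat (ham X)))"
  by (rule eigs_linear_factors, rule char_poly_upper_triangular)
    (auto simp: ham_def upper_triangular_def)

lemma eigs_ham_card_1: "card X = 1 \<Longrightarrow> eigs (ham X) = [0, 1]"
  unfolding eigs_ham by (simp add: diag_mat_def ham_def upt_conv_Cons bitq_def)

lemma eigs_ham_card_2: "card X = 2 \<Longrightarrow> eigs (ham X) = [0, 1, 1, 2]"
  unfolding eigs_ham by (simp add: diag_mat_def ham_def upt_conv_Cons bitq_def lessThan_nat_numeral)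

lemma passive_energy_card_1:
  assumes "A \<in> carrier_mat 2 2" "char_poly A = (\<Prod>r\<leftarrow>[r1, r2]. [:- r, 1:])" "card S = 1"
  shows "passive_energy A (ham S) = min (Re r1) (Re r2)"
proof -
  have "eigs A = sort [Re r1, Re r2]"
    using eigs_linear_factors[OF assms(2)] by simp
  then show ?thesis
    using assms(1,3) by (simp add: passive_energy_def eigs_ham_card_1 lessThan_nat_numeral min_def)
qed

lemma passive_energy_card_2_le:
  assumes "A \<in> carrier_mat 4 4" "char_poly A = (\<Prod>r\<leftarrow>[0, 0, r1, r2]. [:- r, 1:])" "card S = 2"
  shows "passive_energy A (ham S) \<le> min (Re r1) (Re r2)"
proof -
  define e where "e = sort [0, 0, Re r1, Re r2]"
  have "length e = 4" by (simp add: e_def)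
  then obtain a b c d where e: "e = [a, b, c, d]"
    by (auto simp: numeral_eq_Suc length_Suc_conv)
  have "mset e = {#0, 0, Re r1, Re r2#}" and "sorted e"
    by (simp_all add: e_def)
  then have "a + b + c + d = Re r1 + Re r2" "a \<le> 0" "Re r1 \<le> d" "Re r2 \<le> d"
    unfolding e by (auto dest: arg_cong[where f = sum_mset] simp: insert_eq_iff add_eq_conv_ex)
  moreover have "eigs A = e"
    using eigs_linear_factors[OF assms(2)] by (simp add: e_def)
  then have "passive_energy A (ham S) = c + b + 2 * a"
    using assms(1,3) by (simp add: passive_energy_def eigs_ham_card_2 e lessThan_nat_numeral)
  ultimately show ?thesis by linarith
qed

subsection \<open>Reduced states from the coefficient matrix\<close>

lemma sum_lessThan_filter:
  fixes n :: nat
  shows "(\<Sum>k\<in>{k. k < n \<and> P k}. f k) = (\<Sum>k<n. if P k then f k else (0 :: 'a :: comm_monoid_add))"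
proof -
  have "{k. k < n \<and> P k} = {k \<in> {..<n}. P k}"
    by auto
  then show ?thesis
    using sum.inter_filter[of "{..<n}" f P] by simp
qed

lemma sum_if_eq_both:
  fixes m :: nat
  assumes "a < m"
  shows "(\<Sum>y<m. if P \<and> Q \<and> a = y \<and> b = y then c else 0)
    = (if P \<and> Q \<and> b = a then c else (0 :: 'a :: comm_monoid_add))"
proof -
  have "(\<Sum>y<m. if P \<and> Q \<and> a = y \<and> b = y then c else 0)
      = (\<Sum>y<m. if y = a then (if P \<and> Q \<and> b = a then c else 0) else 0)"
    by (rule sum.cong) auto
  then show ?thesis
    using assms by simp
qed

lemma sub_index_less: "sub_index X k < 2 ^ card X"
proof -
  have "sub_index X k \<le> (\<Sum>t<card X. 2 ^ t)"
    unfolding sub_index_def by (intro sum_mono) simp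
  also have "\<dots> = 2 ^ card X - 1"
    using mask_eq_sum_exp_nat[of "card X"] by (simp add: lessThan_def)
  also have "\<dots> < 2 ^ card X"
    by simp
  finally show ?thesis .
qed

lemma reduced_carrier: "reduced \<psi> X \<in> carrier_mat (2 ^ card X) (2 ^ card X)"
  by (simp add: reduced_def)

(* psi = (SUM i j. coeff_mat psi X $$ (i, j) |i>_X |j>_(qubits - X)) *)
definition coeff_mat :: "complex vec \<Rightarrow> nat set \<Rightarrow> complex mat" where
  "coeff_mat \<psi> X = mat (2 ^ card X) (2 ^ card (qubits - X)) (\<lambda>(i, j).
     \<Sum>k<8. if sub_index X k = i \<and> sub_index (qubits - X) k = j then \<psi> $ k else 0)"

abbreviation conj_transpose :: "complex mat \<Rightarrow> complex mat" where
  "conj_transpose C \<equiv> transpose_mat (map_mat cnj C)"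

lemma coeff_mat_carrier: "coeff_mat \<psi> X \<in> carrier_mat (2 ^ card X) (2 ^ card (qubits - X))"
  by (simp add: coeff_mat_def)

lemma reduced_eq_coeff_mat: "reduced \<psi> X = coeff_mat \<psi> X * conj_transpose (coeff_mat \<psi> X)"
proof (rule eq_matI)
  fix i j
  assume "i < dim_row (coeff_mat \<psi> X * conj_transpose (coeff_mat \<psi> X))"
    and "j < dim_col (coeff_mat \<psi> X * conj_transpose (coeff_mat \<psi> X))"
  then have ij: "i < 2 ^ card X" "j < 2 ^ card X"
    by (simp_all add: coeff_mat_def)
  let ?Y = "qubits - X"
  let ?t = "\<lambda>k l. \<psi> $ k * cnj (\<psi> $ l)"
  have if_mult: "(if P then a else 0) * (if Q then b else 0) = (if P \<and> Q then a * b else (0 :: complex))"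
    for P Q a b by simp
  have cnj_if: "cnj (if P then a else 0) = (if P then cnj a else 0)" for P a
    by simp
  have "(coeff_mat \<psi> X * conj_transpose (coeff_mat \<psi> X)) $$ (i, j) =
      (\<Sum>y<2 ^ card ?Y. (\<Sum>k<8. if sub_index X k = i \<and> sub_index ?Y k = y then \<psi> $ k else 0) *
         (\<Sum>l<8. if sub_index X l = j \<and> sub_index ?Y l = y then cnj (\<psi> $ l) else 0))"
    using ij by (simp add: coeff_mat_def scalar_prod_def cnj_sum atLeast0LessThan cnj_if)
  also have "\<dots> = (\<Sum>y<2 ^ card ?Y. \<Sum>k<8. \<Sum>l<8. if sub_index X k = i \<and> sub_index X l = j
         \<and> sub_index ?Y k = y \<and> sub_index ?Y l = y then ?t k l else 0)"
    by (simp add: sum_product if_mult conj_ac)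
  also have "\<dots> = (\<Sum>k<8. \<Sum>l<8. \<Sum>y<2 ^ card ?Y. if sub_index X k = i \<and> sub_index X l = j
         \<and> sub_index ?Y k = y \<and> sub_index ?Y l = y then ?t k l else 0)"
    by (subst sum.swap) (simp add: sum.swap[where A = "{..<2 ^ card ?Y}"])
  also have "\<dots> = (\<Sum>k<8. \<Sum>l<8. if sub_index X k = i \<and> sub_index X l = j
         \<and> sub_index ?Y l = sub_index ?Y k then ?t k l else 0)"
    using sub_index_less[of ?Y] by (simp add: sum_if_eq_both)
  also have "\<dots> = (\<Sum>k<8. if sub_index X k = i then \<Sum>l<8. if sub_index X l = j
         \<and> sub_index ?Y l = sub_index ?Y k then ?t k l else 0 else 0)"
    by (intro sum.cong) auto
  also have "\<dots> = reduced \<psi> X $$ (i, j)"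
    using ij by (simp add: reduced_def sum_lessThan_filter)
  finally show "reduced \<psi> X $$ (i, j) = (coeff_mat \<psi> X * conj_transpose (coeff_mat \<psi> X)) $$ (i, j)" ..
qed (simp_all add: reduced_def coeff_mat_def)

lemma coeff_mat_compl:
  assumes "X \<subseteq> qubits"
  shows "coeff_mat \<psi> (qubits - X) = transpose_mat (coeff_mat \<psi> X)"
proof -
  have "qubits - (qubits - X) = X"
    using assms by blast
  then show ?thesis
    by (intro eq_matI) (auto simp: coeff_mat_def conj_commute)
qed

lemma reduced_compl:
  assumes "X \<subseteq> qubits"
  shows "reduced \<psi> (qubits - X) = transpose_mat (conj_transpose (coeff_mat \<psi> X) * coeff_mat \<psi> X)"
  using coeff_mat_carrier[of \<psi> X]
  by (simp add: reduced_eq_coeff_mat coeff_mat_compl[OF assms] transpose_mult[of _ _ "2 ^ card X"]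
      map_mat_transpose)

lemma char_poly_reduced_compl:
  assumes "X \<subseteq> qubits"
  shows "monom 1 (2 ^ card (qubits - X)) * char_poly (reduced \<psi> X)
    = monom 1 (2 ^ card X) * char_poly (reduced \<psi> (qubits - X))"
proof -
  let ?C = "coeff_mat \<psi> X"
  have C: "?C \<in> carrier_mat (2 ^ card X) (2 ^ card (qubits - X))"
    by (rule coeff_mat_carrier)
  then have "conj_transpose ?C * ?C \<in> carrier_mat (2 ^ card (qubits - X)) (2 ^ card (qubits - X))"
    by auto
  then have "char_poly (reduced \<psi> (qubits - X)) = char_poly (conj_transpose ?C * ?C)"
    by (simp add: reduced_compl[OF assms])
  moreover have "conj_transpose ?C \<in> carrier_mat (2 ^ card (qubits - X)) (2 ^ card X)"
    using C by auto
  ultimately show ?thesis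
    using char_poly_mult_commute[OF C] by (simp add: reduced_eq_coeff_mat)
qed

subsection \<open>Cuts of a single qubit\<close>

lemma qubits_cases: "t \<in> qubits \<Longrightarrow> t = 0 \<or> t = 1 \<or> t = 2"
  by (auto simp: qubits_def)

lemma qubits_minus_singleton:
  "qubits - {0} = {1, 2}" "qubits - {1} = {0, 2}" "qubits - {2} = {0, 1}"
  by (auto simp: qubits_def)

lemma card_qubits_minus_singleton: "Z \<in> qubits \<Longrightarrow> card (qubits - {Z}) = 2"
  by (auto simp: qubits_def)

lemma reduced_singleton_carrier: "reduced \<psi> {Z} \<in> carrier_mat 2 2"
  using reduced_carrier[of \<psi> "{Z}"] by simp

lemma sub_index_singleton: "sub_index {t} k = (if bitq k t then 1 else 0)"
  by (simp add: sub_index_def)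

lemma sub_index_doubleton:
  "s < t \<Longrightarrow> sub_index {s, t} k = (if bitq k s then 1 else 0) + (if bitq k t then 2 else 0)"
  by (simp add: sub_index_def lessThan_nat_numeral)

lemma bitq_expansion:
  "k < 8 \<Longrightarrow> k = (if bitq k 0 then 1 else 0) + (if bitq k 1 then 2 else 0) + (if bitq k 2 then 4 else 0)"
  unfolding bitq_def even_iff_mod_2_eq_zero by (simp add: power2_eq_square) presburger

lemma sub_index_cut_inj:
  assumes "Z \<in> qubits"
  shows "inj_on (\<lambda>k. (sub_index {Z} k, sub_index (qubits - {Z}) k)) {..<8}"
proof (rule inj_onI)
  fix k l :: nat
  assume "k \<in> {..<8}" "l \<in> {..<8}"
    and "(sub_index {Z} k, sub_index (qubits - {Z}) k) = (sub_index {Z} l, sub_index (qubits - {Z}) l)"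
  then have eq: "sub_index {Z} k = sub_index {Z} l" "sub_index (qubits - {Z}) k = sub_index (qubits - {Z}) l"
    by simp_all
  have bit_eq: "(if a then 1 else 0) = (if b then 1 else (0 :: nat)) \<longleftrightarrow> a = b"
    "(if a then 1 else 0) + (if c then 2 else 0) = (if b then 1 else 0) + (if d then 2 else (0 :: nat))
       \<longleftrightarrow> a = b \<and> c = d" for a b c d
    by auto
  have lt: "(0 :: nat) < 1" "(0 :: nat) < 2" "(1 :: nat) < 2"
    by simp_all
  have bits: "bitq k 0 = bitq l 0" "bitq k 1 = bitq l 1" "bitq k 2 = bitq l 2"
    using qubits_cases[OF assms] eq
    by (auto simp only: qubits_minus_singleton sub_index_singleton sub_index_doubleton lt bit_eq)
  have "k = (if bitq k 0 then 1 else 0) + (if bitq k 1 then 2 else 0) + (if bitq k 2 then 4 else 0)"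
    using \<open>k \<in> {..<8}\<close> by (intro bitq_expansion) simp
  also have "\<dots> = (if bitq l 0 then 1 else 0) + (if bitq l 1 then 2 else 0) + (if bitq l 2 then 4 else 0)"
    by (simp only: bits)
  also have "\<dots> = l"
    using \<open>l \<in> {..<8}\<close> by (intro bitq_expansion[symmetric]) simp
  finally show "k = l" .
qed

lemma sub_index_cut_bij:
  assumes "Z \<in> qubits"
  shows "bij_betw (\<lambda>k. (sub_index {Z} k, sub_index (qubits - {Z}) k)) {..<8} ({..<2} \<times> {..<4})"
proof -
  let ?f = "\<lambda>k. (sub_index {Z} k, sub_index (qubits - {Z}) k)"
  have "?f ` {..<8} \<subseteq> {..<2} \<times> {..<4}"
    using sub_index_less[of "{Z}"] sub_index_less[of "qubits - {Z}"]
    by (auto simp: card_qubits_minus_singleton[OF assms])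
  moreover have "card (?f ` {..<8}) = card ({..<2::nat} \<times> {..<4::nat})"
    using card_image[OF sub_index_cut_inj[OF assms]] by simp
  ultimately have "?f ` {..<8} = {..<2} \<times> {..<4}"
    by (intro card_subset_eq) auto
  then show ?thesis
    using sub_index_cut_inj[OF assms] by (simp add: bij_betw_def)
qed

lemma coeff_mat_sub_index_cut:
  assumes "Z \<in> qubits" "k < 8"
  shows "coeff_mat \<psi> {Z} $$ (sub_index {Z} k, sub_index (qubits - {Z}) k) = \<psi> $ k"
proof -
  have "sub_index {Z} l = sub_index {Z} k \<and> sub_index (qubits - {Z}) l = sub_index (qubits - {Z}) k
      \<longleftrightarrow> l = k" if "l < 8" for l
    using inj_onD[OF sub_index_cut_inj[OF assms(1)], of l k] that assms(2) by auto
  then have "coeff_mat \<psi> {Z} $$ (sub_index {Z} k, sub_index (qubits - {Z}) k)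
      = (\<Sum>l<8. if l = k then \<psi> $ l else 0)"
    using sub_index_less[of "{Z}" k] sub_index_less[of "qubits - {Z}" k]
    by (auto simp: coeff_mat_def intro!: sum.cong)
  also have "\<dots> = \<psi> $ k"
    using assms(2) by simp
  finally show ?thesis .
qed

lemma trace_reduced_singleton:
  assumes "is_pure_state \<psi>" "Z \<in> qubits"
  shows "reduced \<psi> {Z} $$ (0, 0) + reduced \<psi> {Z} $$ (1, 1) = 1"
proof -
  let ?C = "coeff_mat \<psi> {Z}"
  let ?cut = "\<lambda>k. (sub_index {Z} k, sub_index (qubits - {Z}) k)"
  have C: "?C \<in> carrier_mat 2 4"
    using coeff_mat_carrier[of \<psi> "{Z}"] by (simp add: card_qubits_minus_singleton[OF assms(2)])
  then have "reduced \<psi> {Z} $$ (z, z) = (\<Sum>a<4. ?C $$ (z, a) * cnj (?C $$ (z, a)))" if "z < 2" for z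
    using that by (simp add: reduced_eq_coeff_mat scalar_prod_def atLeast0LessThan)
  then have "reduced \<psi> {Z} $$ (0, 0) + reduced \<psi> {Z} $$ (1, 1)
      = (\<Sum>z<2. \<Sum>a<4. ?C $$ (z, a) * cnj (?C $$ (z, a)))"
    by (simp add: numeral_2_eq_2)
  also have "\<dots> = (\<Sum>p\<in>{..<2} \<times> {..<4}. ?C $$ p * cnj (?C $$ p))"
    by (simp add: sum.cartesian_product)
  also have "\<dots> = (\<Sum>k<8. ?C $$ ?cut k * cnj (?C $$ ?cut k))"
    by (rule sum.reindex_bij_betw[OF sub_index_cut_bij[OF assms(2)], symmetric])
  also have "\<dots> = (\<Sum>k<8. \<psi> $ k * cnj (\<psi> $ k))"
    using assms(2) by (simp add: coeff_mat_sub_index_cut)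
  also have "\<dots> = (\<Sum>k<8. complex_of_real ((cmod (\<psi> $ k))\<^sup>2))"
    by (simp only: complex_norm_square)
  also have "\<dots> = 1"
    using assms(1) unfolding is_pure_state_def of_real_sum[symmetric] by simp
  finally show ?thesis .
qed

lemma coeff_mat_product:
  assumes "product_across \<psi> Z" "Z \<in> qubits"
  obtains \<phi> \<chi> :: "nat \<Rightarrow> complex"
  where "coeff_mat \<psi> {Z} = mat 2 4 (\<lambda>(z, a). \<chi> z * \<phi> a)"
proof -
  obtain \<phi> \<chi> :: "nat \<Rightarrow> complex"
    where prod: "\<And>k. k < 8 \<Longrightarrow> \<psi> $ k = \<phi> (sub_index (qubits - {Z}) k) * \<chi> (sub_index {Z} k)"
    using assms(1) unfolding product_across_def by blast
  have "coeff_mat \<psi> {Z} $$ (z, a) = \<chi> z * \<phi> a" if "z < 2" "a < 4" for z a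
  proof -
    have "(z, a) \<in> (\<lambda>k. (sub_index {Z} k, sub_index (qubits - {Z}) k)) ` {..<8}"
      using that bij_betw_imp_surj_on[OF sub_index_cut_bij[OF assms(2)]] by auto
    then obtain k where "k < 8" "z = sub_index {Z} k" "a = sub_index (qubits - {Z}) k"
      by auto
    then show ?thesis
      using coeff_mat_sub_index_cut[OF assms(2), of k \<psi>] prod[of k] by simp
  qed
  then have "coeff_mat \<psi> {Z} = mat 2 4 (\<lambda>(z, a). \<chi> z * \<phi> a)"
    using coeff_mat_carrier[of \<psi> "{Z}"] card_qubits_minus_singleton[OF assms(2)]
    by (intro eq_matI) auto
  then show ?thesis
    using that by blast
qed

lemma det_reduced_singleton_if_product:
  assumes "product_across \<psi> Z" "Z \<in> qubits"
  shows "det (reduced \<psi> {Z}) = 0"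
proof -
  obtain \<phi> \<chi> :: "nat \<Rightarrow> complex"
    where C: "coeff_mat \<psi> {Z} = mat 2 4 (\<lambda>(z, a). \<chi> z * \<phi> a)"
    using coeff_mat_product[OF assms] .
  define N where "N = (\<Sum>a<4. \<phi> a * cnj (\<phi> a))"
  have entries: "reduced \<psi> {Z} $$ (z, w) = \<chi> z * cnj (\<chi> w) * N" if "z < 2" "w < 2" for z w
    using that by (simp add: reduced_eq_coeff_mat C N_def scalar_prod_def atLeast0LessThan
        sum_distrib_left mult_ac)
  show ?thesis
    using reduced_singleton_carrier by (simp add: det_mat_2 entries)
qed

lemma Delta_singleton:
  assumes "Z \<in> qubits"
  shows "Delta \<psi> {Z} = passive_energy (reduced \<psi> {Z}) (ham {Z})
    + passive_energy (reduced \<psi> (qubits - {Z})) (ham (qubits - {Z}))"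
proof -
  have "{Z} \<noteq> qubits"
    using card_qubits_minus_singleton[OF assms] by auto
  then show ?thesis
    by (simp add: Delta_def)
qed

lemma Delta_singleton_le:
  assumes Z: "Z \<in> qubits" and cp: "char_poly (reduced \<psi> {Z}) = (\<Prod>r\<leftarrow>[r1, r2]. [:- r, 1:])"
  shows "Delta \<psi> {Z} \<le> 2 * min (Re r1) (Re r2)"
proof -
  have card: "card (qubits - {Z}) = 2"
    using card_qubits_minus_singleton[OF Z] .
  have "monom 1 2 * char_poly (reduced \<psi> (qubits - {Z})) = monom 1 4 * (\<Prod>r\<leftarrow>[r1, r2]. [:- r, 1:])"
    using char_poly_reduced_compl[of "{Z}" \<psi>] Z card by (simp add: cp)
  also have "\<dots> = monom 1 2 * (\<Prod>r\<leftarrow>[0, 0, r1, r2]. [:- r, 1:])"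
  proof -
    have "[:- 0, 1:] * [:- 0, 1:] = monom (1 :: complex) 2"
      by (simp add: monom_altdef power2_eq_square)
    then have "monom (1 :: complex) 4 = monom 1 2 * ([:- 0, 1:] * [:- 0, 1:])"
      by (simp only: mult_monom) simp
    then show ?thesis
      by (simp only: prod_list.Cons list.map mult.assoc)
  qed
  finally have "char_poly (reduced \<psi> (qubits - {Z})) = (\<Prod>r\<leftarrow>[0, 0, r1, r2]. [:- r, 1:])"
    by (rule mult_left_cancel[THEN iffD1, rotated]) simp
  then have "passive_energy (reduced \<psi> (qubits - {Z})) (ham (qubits - {Z})) \<le> min (Re r1) (Re r2)"
    using passive_energy_card_2_le reduced_carrier[of \<psi> "qubits - {Z}"] card by simp
  moreover have "passive_energy (reduced \<psi> {Z}) (ham {Z}) = min (Re r1) (Re r2)"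
    using passive_energy_card_1[OF reduced_singleton_carrier cp] by simp
  ultimately show ?thesis
    by (simp add: Delta_singleton[OF Z])
qed

lemma Delta_singleton_le_one:
  assumes "is_pure_state \<psi>" "Z \<in> qubits"
  shows "Delta \<psi> {Z} \<le> 1"
proof -
  obtain r1 r2 where cp: "char_poly (reduced \<psi> {Z}) = (\<Prod>r\<leftarrow>[r1, r2]. [:- r, 1:])"
    and "r1 + r2 = reduced \<psi> {Z} $$ (0, 0) + reduced \<psi> {Z} $$ (1, 1)"
    and "r1 * r2 = det (reduced \<psi> {Z})"
    using char_poly_mat_2_roots[OF reduced_singleton_carrier] .
  then have "r1 + r2 = 1"
    using trace_reduced_singleton[OF assms] by simp
  then have "Re r1 + Re r2 = 1"
    by (metis one_complex.sel(1) plus_complex.sel(1))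
  moreover have "min (Re r1) (Re r2) \<le> Re r1" "min (Re r1) (Re r2) \<le> Re r2"
    by simp_all
  ultimately show ?thesis
    using Delta_singleton_le[OF assms(2) cp] by linarith
qed

lemma Delta_singleton_nonpos_if_product:
  assumes "Z \<in> qubits" "product_across \<psi> Z"
  shows "Delta \<psi> {Z} \<le> 0"
proof -
  obtain r1 r2 where cp: "char_poly (reduced \<psi> {Z}) = (\<Prod>r\<leftarrow>[r1, r2]. [:- r, 1:])"
    and "r1 + r2 = reduced \<psi> {Z} $$ (0, 0) + reduced \<psi> {Z} $$ (1, 1)"
    and "r1 * r2 = det (reduced \<psi> {Z})"
    using char_poly_mat_2_roots[OF reduced_singleton_carrier] .
  then have "r1 = 0 \<or> r2 = 0"
    using det_reduced_singleton_if_product[OF assms(2,1)] by simp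
  then have "min (Re r1) (Re r2) \<le> 0"
    by auto
  then show ?thesis
    using Delta_singleton_le[OF assms(1) cp] by linarith
qed

lemma Delta_compl:
  assumes "X \<subseteq> qubits"
  shows "Delta \<psi> (qubits - X) = Delta \<psi> X"
proof -
  have "qubits - (qubits - X) = X"
    using assms by blast
  moreover have "qubits - X = {} \<longleftrightarrow> X = qubits" "qubits - X = qubits \<longleftrightarrow> X = {}"
    using assms by (auto simp: qubits_def)
  ultimately show ?thesis
    by (auto simp: Delta_def)
qed

lemma sum_Pow_qubits:
  "(\<Sum>X\<in>Pow qubits. f X)
    = f {} + f {0} + f {1} + f {2} + f {0, 1} + f {0, 2} + f {1, 2} + (f qubits :: 'a :: comm_monoid_add)"
proof -
  let ?Xs = "[{}, {0}, {1}, {2}, {0, 1}, {0, 2}, {1, 2}, qubits]"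
  have "distinct (map (\<lambda>X. (0 \<in> X, 1 \<in> X, 2 \<in> X)) ?Xs)"
    by (simp add: qubits_def)
  then have "distinct ?Xs"
    by (simp only: distinct_map)
  moreover have "Pow qubits = set ?Xs"
    by (simp add: qubits_def Pow_insert insert_commute)
  ultimately show ?thesis
    by (simp only: sum.distinct_set_conv_list) (simp add: add.assoc)
qed

lemma sum_Delta_eq_singletons: "(\<Sum>X\<in>Pow qubits. Delta \<psi> X) = 2 * (\<Sum>t\<in>qubits. Delta \<psi> {t})"
proof -
  have "Delta \<psi> {0, 1} = Delta \<psi> {2}" "Delta \<psi> {0, 2} = Delta \<psi> {1}"
    "Delta \<psi> {1, 2} = Delta \<psi> {0}"
    using Delta_compl[of "{2}" \<psi>] Delta_compl[of "{1}" \<psi>] Delta_compl[of "{0}" \<psi>]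
    by (simp_all only: qubits_minus_singleton) (simp_all add: qubits_def)
  moreover have "Delta \<psi> {} = 0" "Delta \<psi> qubits = 0"
    by (simp_all add: Delta_def)
  ultimately show ?thesis
    by (simp add: sum_Pow_qubits) (simp add: qubits_def)
qed

theorem mainTheorem5:
  fixes \<psi> :: "complex vec"
  assumes "is_pure_state \<psi>"
    and "ME \<psi> > 1 / 2"
  shows "genuinely_entangled \<psi>"
proof (rule ccontr)
  assume "\<not> genuinely_entangled \<psi>"
  then obtain Z where Z: "Z \<in> qubits" "product_across \<psi> Z"
    unfolding genuinely_entangled_def by blast
  have "(\<Sum>t\<in>qubits. Delta \<psi> {t}) = Delta \<psi> {Z} + (\<Sum>t\<in>qubits - {Z}. Delta \<psi> {t})"
    using Z(1) by (simp add: sum.remove qubits_def)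
  also have "\<dots> \<le> 0 + (\<Sum>t\<in>qubits - {Z}. 1)"
    using Delta_singleton_nonpos_if_product[OF Z] Delta_singleton_le_one[OF assms(1)]
    by (intro add_mono sum_mono) auto
  also have "\<dots> = 2"
    using card_qubits_minus_singleton[OF Z(1)] by simp
  finally have "ME \<psi> \<le> 1 / 2"
    by (simp add: ME_def sum_Delta_eq_singletons)
  with assms(2) show False
    by simp
qed

end
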